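(* Let $q=p^a$ with $p$ prime, let $G\le GL(V)=GL_d(q)$ be $p$-exceptional with $C_V(O^{p'}(G))=0$, let $t\in G$ have order $p$, and let $P$ be a Sylow $p$-subgroup of $G$. Then: (i) $d\le r_p\log_q|G:N_G(P)|$, where $r_p$ is the minimal number of $G$-conjugates of $P$ that generate $O^{p'}(G)$; (ii) $|V|\le |C_V(t)|\cdot|t^G|$; (iii) if $O^{p'}(G)$ is generated by $\alpha$ conjugates of $t$, then $q^{d/\alpha}\le|t^G|$.
   Context: $G\le GL_d(q)$ is $p$-exceptional if $p$ divides $|G|$ and every orbit of $G$ on $V=\mathbb{F}_q^d$ has size coprime to $p$. $O^{p'}(G)$ is the subgroup generated by all $p$-elements of $G$. $C_V(X)$ is the subspace of vectors fixed by all elements of $X$; $t^G$ is the conjugacy class of $t$ in $G$. *)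

theory Defs
  imports "HOL-Analysis.Analysis" "HOL-Algebra.Algebra"
begin

definition GL :: "('k::field ^'n::finite ^'n) monoid" where
  "GL = \<lparr>carrier = {A. invertible A}, mult = (**), one = mat 1\<rparr>"

definition mat_act :: "'k::field ^'n::finite ^'n \<Rightarrow> 'k ^'n \<Rightarrow> 'k ^'n" where
  "mat_act g v = g *v v"

definition p_exceptional :: "nat \<Rightarrow> ('k::field ^'n::finite ^'n) set \<Rightarrow> bool" where
  "p_exceptional p G \<longleftrightarrow> p dvd card G \<and>
     (\<forall>v::'k^'n. coprime (card (orbit (GL\<lparr>carrier := G\<rparr>) mat_act v)) p)"

definition p_elements :: "nat \<Rightarrow> ('k::field ^'n::finite ^'n) set \<Rightarrow> ('k ^'n ^'n) set" where
  "p_elements p G = {g \<in> G. \<exists>k::nat. group.ord GL g = p ^ k}"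

definition Opp :: "nat \<Rightarrow> ('k::field ^'n::finite ^'n) set \<Rightarrow> ('k ^'n ^'n) set" where
  "Opp p G = generate GL (p_elements p G)"

definition fixed_space :: "('k::field ^'n::finite ^'n) set \<Rightarrow> ('k ^'n) set" where
  "fixed_space S = {x. \<forall>g. g \<in> S \<longrightarrow> mat_act g x = x}"

definition conj_elem :: "('k::field ^'n::finite ^'n) \<Rightarrow> ('k ^'n ^'n) \<Rightarrow> ('k ^'n ^'n)" where
  "conj_elem g x = g ** x ** matrix_inv g"

definition conj_class :: "('k::field ^'n::finite ^'n) set \<Rightarrow> ('k ^'n ^'n) \<Rightarrow> ('k ^'n ^'n) set" where
  "conj_class G t = {conj_elem g t | g. g \<in> G}"

definition sylow_sub :: "nat \<Rightarrow> ('k::field ^'n::finite ^'n) set \<Rightarrow> ('k ^'n ^'n) set \<Rightarrow> bool" where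
  "sylow_sub p G P \<longleftrightarrow> subgroup P GL \<and> P \<subseteq> G \<and> card P = p ^ multiplicity p (card G)"

definition r_p :: "nat \<Rightarrow> ('k::field ^'n::finite ^'n) set \<Rightarrow> ('k ^'n ^'n) set \<Rightarrow> nat" where
  "r_p p G P = (LEAST r. \<exists>gs. length gs = r \<and> set gs \<subseteq> G \<and>
       generate GL (\<Union>g\<in>set gs. conj_elem g ` P) = Opp p G)"

end

theory Submission
  imports Defs
begin

text \<open>
  Write V = k^n with |k| = q and consider a p-subgroup K of G.  Since G is
  p-exceptional, K acts on every G-orbit of V, an orbit of size prime to p, and therefore fixes
  a point of it; translating back, every vector v is fixed by some G-conjugate of K.  So V is
  covered by the fixed spaces of the conjugates of K, all of the same size, which gives
  |V| <= #(conjugates of K) * |C_V(K)|.  On the other hand, if subsets Q_1, ..., Q_r of GL(V)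
  have trivial common fixed space, then V embeds into the product of the quotients
  V / C_V(Q_i), so |V| <= prod |V : C_V(Q_i)|.  Applied to r_p conjugates of a Sylow subgroup P
  (which generate O^{p'}(G), because by Sylow's theorem the p-elements are exactly the elements
  of the conjugates of P) this yields q^d <= |G : N_G(P)|^{r_p}, i.e. part (i); the covering
  bound for K = <t> is part (ii); and applied to alpha conjugates of t it yields
  q^d <= |t^G|^alpha, i.e. part (iii).
\<close>

text \<open>Left cosets are written with the HOL-Algebra notation, which clashes with the ASCII
  notation for multiset inclusion.\<close>
no_notation (ASCII) subset_mset (infix \<open><#\<close> 50)

section \<open>The general linear group as a group\<close>

lemma matrix_inv_inverse:
  fixes A :: "'k::field^'n::finite^'n"
  assumes "invertible A"
  shows "A ** matrix_inv A = mat 1" and "matrix_inv A ** A = mat 1"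
proof -
  have "\<exists>A'. A ** A' = mat 1 \<and> A' ** A = mat 1"
    using assms unfolding invertible_def by blast
  then have "A ** matrix_inv A = mat 1 \<and> matrix_inv A ** A = mat 1"
    unfolding matrix_inv_def by (rule someI_ex)
  then show "A ** matrix_inv A = mat 1" and "matrix_inv A ** A = mat 1" by auto
qed

lemma invertible_matrix_inv:
  fixes A :: "'k::field^'n::finite^'n"
  assumes "invertible A"
  shows "invertible (matrix_inv A)"
  using matrix_inv_inverse[OF assms] unfolding invertible_def by blast

lemma GL_simps [simp]:
  "carrier GL = {A. invertible A}" "mult GL = (**)" "one GL = mat 1"
  by (auto simp: GL_def)

lemma group_GL: "group (GL :: ('k::field^'n::finite^'n) monoid)"
proof (rule groupI)
  show "\<exists>y\<in>carrier GL. y \<otimes>\<^bsub>GL\<^esub> x = \<one>\<^bsub>GL\<^esub>" if "x \<in> carrier GL" for x :: "'k^'n^'n"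
    using that matrix_inv_inverse invertible_matrix_inv by auto
  show "\<one>\<^bsub>GL\<^esub> \<in> carrier (GL :: ('k^'n^'n) monoid)"
    unfolding GL_simps invertible_def by (auto intro: exI[of _ "mat 1"])
qed (auto simp: invertible_mult matrix_mul_assoc)

interpretation GL_group: group "GL :: ('k::field^'n::finite^'n) monoid"
  by (rule group_GL)

lemma GL_inv:
  fixes A :: "'k::field^'n::finite^'n"
  assumes "invertible A"
  shows "inv\<^bsub>GL\<^esub> A = matrix_inv A"
  using assms matrix_inv_inverse[OF assms] invertible_matrix_inv[OF assms]
  by (intro GL_group.inv_equality) auto

lemma conj_elem_GL:
  fixes g :: "'k::field^'n::finite^'n"
  assumes "invertible g"
  shows "conj_elem g x = g \<otimes>\<^bsub>GL\<^esub> x \<otimes>\<^bsub>GL\<^esub> inv\<^bsub>GL\<^esub> g"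
  using GL_inv[OF assms] by (simp add: conj_elem_def)

lemma conj_elem_subgroup:
  fixes G :: "('k::field^'n::finite^'n) set"
  defines "H \<equiv> GL\<lparr>carrier := G\<rparr>"
  assumes "subgroup G GL" and "g \<in> G"
  shows "conj_elem g x = g \<otimes>\<^bsub>H\<^esub> x \<otimes>\<^bsub>H\<^esub> inv\<^bsub>H\<^esub> g"
  using assms subgroup.subset[OF assms(2)] conj_elem_GL[of g x] by auto

section \<open>Finite group theory\<close>

lemma (in group) ord_conjugate:
  assumes "g \<in> carrier G" and "x \<in> carrier G"
  shows "ord (g \<otimes> x \<otimes> inv g) = ord x"
proof -
  have pow: "(g \<otimes> x \<otimes> inv g) [^] n = g \<otimes> x [^] n \<otimes> inv g" for n :: nat
  proof (induction n)
    case 0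
    then show ?case using assms by simp
  next
    case (Suc n)
    have "(g \<otimes> x \<otimes> inv g) [^] Suc n = (g \<otimes> x [^] n \<otimes> inv g) \<otimes> (g \<otimes> x \<otimes> inv g)"
      using Suc by simp
    also have "\<dots> = g \<otimes> x [^] n \<otimes> (inv g \<otimes> g) \<otimes> x \<otimes> inv g"
      using assms by (simp only: m_assoc m_closed inv_closed nat_pow_closed)
    also have "\<dots> = g \<otimes> x [^] Suc n \<otimes> inv g"
      using assms by (simp add: m_assoc)
    finally show ?case .
  qed
  have "(g \<otimes> x [^] n \<otimes> inv g = \<one>) \<longleftrightarrow> (x [^] n = \<one>)" for n :: nat
    using assms by (metis inv_closed m_closed nat_pow_closed one_closed r_inv r_one right_cancel
        inv_solve_left)
  then show ?thesis
    using assms by (simp add: ord_unique pow pow_eq_id)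
qed

lemma (in group) ord_subgroup:
  assumes "subgroup H G" and "x \<in> H"
  shows "group.ord (G\<lparr>carrier := H\<rparr>) x = ord x"
proof -
  interpret H: group "G\<lparr>carrier := H\<rparr>"
    using assms(1) is_group by (rule subgroup.subgroup_is_group)
  have "x \<in> carrier G" using assms subgroup.subset by blast
  then show ?thesis
    using assms by (simp add: H.ord_unique pow_eq_id flip: nat_pow_consistent)
qed

lemma group_action_restrict:
  fixes K (structure)
  assumes "group K"
    and closed: "\<And>g x. g \<in> carrier K \<Longrightarrow> x \<in> E \<Longrightarrow> f g x \<in> E"
    and one: "\<And>x. x \<in> E \<Longrightarrow> f \<one> x = x"
    and mult: "\<And>g h x. g \<in> carrier K \<Longrightarrow> h \<in> carrier K \<Longrightarrow> x \<in> E \<Longrightarrow> f (g \<otimes> h) x = f g (f h x)"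
  shows "group_action K E (\<lambda>g. restrict (f g) E)"
proof -
  interpret group K by fact
  have bij: "restrict (f g) E \<in> Bij E" if g: "g \<in> carrier K" for g
  proof -
    have "bij_betw (f g) E E"
    proof (rule bij_betwI[where g = "f (inv g)"])
      show "f g \<in> E \<rightarrow> E" and "f (inv g) \<in> E \<rightarrow> E" using closed g by auto
      show "f (inv g) (f g x) = x" if "x \<in> E" for x
        using mult[of "inv g" g x] one[of x] that g by auto
      show "f g (f (inv g) y) = y" if "y \<in> E" for y
        using mult[of g "inv g" y] one[of y] that g by auto
    qed
    then show ?thesis unfolding Bij_def by (auto simp: bij_betw_def inj_on_def)
  qed
  have "(\<lambda>g. restrict (f g) E) \<in> hom K (BijGroup E)"
  proof (rule homI)
    show "restrict (f g) E \<in> carrier (BijGroup E)" if "g \<in> carrier K" for g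
      using bij[OF that] by (simp add: BijGroup_def)
    show "restrict (f (g \<otimes> h)) E = restrict (f g) E \<otimes>\<^bsub>BijGroup E\<^esub> restrict (f h) E"
      if "g \<in> carrier K" and "h \<in> carrier K" for g h
      using bij that mult closed by (auto simp: BijGroup_def compose_def fun_eq_iff)
  qed
  then show ?thesis
    unfolding group_action_def group_hom_def group_hom_axioms_def
    using group_BijGroup is_group by blast
qed

text \<open>A p-group acting on a finite set whose size is prime to p fixes a point: every
  non-trivial orbit has size divisible by p.\<close>

lemma p_group_fixed_point:
  fixes K (structure)
  assumes "group K" and "card (carrier K) = p ^ m" and "Factorial_Ring.prime p"
    and "finite E" and "\<not> p dvd card E"
    and closed: "\<And>g x. g \<in> carrier K \<Longrightarrow> x \<in> E \<Longrightarrow> f g x \<in> E"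
    and one: "\<And>x. x \<in> E \<Longrightarrow> f \<one> x = x"
    and mult: "\<And>g h x. g \<in> carrier K \<Longrightarrow> h \<in> carrier K \<Longrightarrow> x \<in> E \<Longrightarrow> f (g \<otimes> h) x = f g (f h x)"
  shows "\<exists>x\<in>E. \<forall>g\<in>carrier K. f g x = x"
proof (rule ccontr)
  assume no_fixed: "\<not> ?thesis"
  let ?\<phi> = "\<lambda>g. restrict (f g) E"
  interpret A: group_action K E ?\<phi>
    using group_action_restrict[OF assms(1) closed one mult] .
  have "p dvd card Orb" if Orb: "Orb \<in> orbits K E ?\<phi>" for Orb
  proof -
    obtain x where x: "x \<in> E" and Ox: "Orb = orbit K ?\<phi> x"
      using Orb unfolding orbits_def by blast
    have "card Orb * card (stabilizer K ?\<phi> x) = p ^ m"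
      using A.orbit_stabilizer_theorem[OF x] Ox assms(2) unfolding order_def by simp
    then obtain i where i: "card Orb = p ^ i"
      using divides_primepow_nat[OF assms(3)] by (metis dvd_triv_left)
    obtain g where g: "g \<in> carrier K" "f g x \<noteq> x" using no_fixed x by blast
    have "x \<in> Orb" and "f g x \<in> Orb"
      using A.orbit_refl[OF x] g(1) x Ox unfolding orbit_def by force+
    then have "card Orb \<noteq> 1" using g(2) by (metis card_1_singletonE singletonD)
    then show ?thesis using i by (cases i) auto
  qed
  then have "p dvd (\<Sum>Orb\<in>orbits K E ?\<phi>. card Orb)" by (rule dvd_sum)
  also have "(\<Sum>Orb\<in>orbits K E ?\<phi>. card Orb) = card E"
    using A.disjoint_sum[OF assms(4), of "\<lambda>_. 1::nat"] by simp
  finally show False using assms(5) by simp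
qed

text \<open>Sylow conjugacy: every p-element of a finite group lies in a conjugate of a Sylow
  p-subgroup, because the cyclic group it generates fixes a left coset of that subgroup.\<close>

lemma (in group) p_element_in_conjugate_sylow:
  assumes fin: "finite (carrier G)" and p: "Factorial_Ring.prime p"
    and P: "subgroup P G" and card_P: "card P = p ^ multiplicity p (order G)"
    and x: "x \<in> carrier G" and ord_x: "ord x = p ^ k"
  shows "\<exists>g\<in>carrier G. \<exists>h\<in>P. x = g \<otimes> h \<otimes> inv g"
proof -
  define K where "K = generate G {x}"
  have K: "subgroup K G" unfolding K_def using x by (intro generate_is_subgroup) simp
  interpret K: group "G\<lparr>carrier := K\<rparr>" using K is_group by (rule subgroup.subgroup_is_group)
  have card_K: "card (carrier (G\<lparr>carrier := K\<rparr>)) = p ^ k"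
    unfolding K_def using generate_pow_card[OF x] ord_x by simp
  have P_carrier: "P \<subseteq> carrier G" using P by (rule subgroup.subset)
  have fin_E: "finite (lcosets P)"
    using lcosets_subset_PowG[OF P] fin by (simp add: finite_subset)
  have "order G \<noteq> 0" using fin by (simp add: order_gt_0_iff_finite[symmetric])
  moreover have "card (lcosets P) * card P = order G" using l_lagrange[OF fin P] .
  ultimately have "card (lcosets P) = order G div p ^ multiplicity p (order G)"
    using card_P by (metis mult_is_0 nonzero_mult_div_cancel_right)
  then have not_dvd: "\<not> p dvd card (lcosets P)"
    using multiplicity_decompose[of "order G" p] \<open>order G \<noteq> 0\<close> prime_gt_1_nat[OF p] by simp
  have closed: "y <# C \<in> lcosets P"
    if y_K: "y \<in> carrier (G\<lparr>carrier := K\<rparr>)" and C: "C \<in> lcosets P" for y C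
  proof -
    obtain a where a: "a \<in> carrier G" "C = a <# P" using C unfolding LCOSETS_def by blast
    have y: "y \<in> carrier G" using y_K subgroup.subset[OF K] by auto
    show ?thesis using a y P_carrier unfolding LCOSETS_def by (auto simp: lcos_m_assoc)
  qed
  have one: "\<one>\<^bsub>G\<lparr>carrier := K\<rparr>\<^esub> <# C = C" if "C \<in> lcosets P" for C
    using that lcosets_subset_PowG[OF P] by (auto simp: lcos_mult_one)
  have mult: "(a \<otimes>\<^bsub>G\<lparr>carrier := K\<rparr>\<^esub> b) <# C = a <# (b <# C)"
    if "a \<in> carrier (G\<lparr>carrier := K\<rparr>)" "b \<in> carrier (G\<lparr>carrier := K\<rparr>)" "C \<in> lcosets P" for a b C
  proof -
    have "C \<subseteq> carrier G" using that(3) lcosets_subset_PowG[OF P] by blast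
    moreover have "a \<in> carrier G" "b \<in> carrier G" using that(1,2) subgroup.subset[OF K] by auto
    ultimately show ?thesis by (simp add: lcos_m_assoc)
  qed
  obtain C where C: "C \<in> lcosets P" and fixed: "\<forall>y\<in>K. y <# C = C"
    using p_group_fixed_point[OF K.is_group card_K p fin_E not_dvd, of "l_coset G"]
      closed one mult by auto
  obtain g where g: "g \<in> carrier G" and Cg: "C = g <# P" using C unfolding LCOSETS_def by blast
  have "x \<in> K" unfolding K_def by (rule generate.incl) simp
  then have "x <# (g <# P) = g <# P" using fixed Cg by simp
  then have "(x \<otimes> g) <# P = g <# P" using x g P_carrier by (simp add: lcos_m_assoc)
  then have "x \<otimes> g \<in> g <# P" using lcos_self[OF _ P, of "x \<otimes> g"] x g by simp
  then obtain h where h: "h \<in> P" and xg: "x \<otimes> g = g \<otimes> h" unfolding l_coset_def by blast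
  have "x = g \<otimes> h \<otimes> inv g"
    using xg x g h P_carrier by (metis inv_solve_right m_closed subsetD)
  then show ?thesis using g h by blast
qed

lemma (in group) p_elements_eq_sylow_conjugates:
  assumes fin: "finite (carrier G)" and p: "Factorial_Ring.prime p"
    and P: "subgroup P G" and card_P: "card P = p ^ multiplicity p (order G)"
  shows "{x \<in> carrier G. \<exists>k. ord x = p ^ k} = (\<Union>g\<in>carrier G. (\<lambda>h. g \<otimes> h \<otimes> inv g) ` P)"
proof (intro equalityI subsetI)
  fix x assume "x \<in> {x \<in> carrier G. \<exists>k. ord x = p ^ k}"
  then obtain k where "x \<in> carrier G" and "ord x = p ^ k" by blast
  then obtain g h where "g \<in> carrier G" "h \<in> P" "x = g \<otimes> h \<otimes> inv g"
    using p_element_in_conjugate_sylow[OF fin p P card_P] by blast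
  then show "x \<in> (\<Union>g\<in>carrier G. (\<lambda>h. g \<otimes> h \<otimes> inv g) ` P)" by blast
next
  fix x assume "x \<in> (\<Union>g\<in>carrier G. (\<lambda>h. g \<otimes> h \<otimes> inv g) ` P)"
  then obtain g h where g: "g \<in> carrier G" and h: "h \<in> P" and x: "x = g \<otimes> h \<otimes> inv g" by blast
  interpret P: group "G\<lparr>carrier := P\<rparr>" using P is_group by (rule subgroup.subgroup_is_group)
  have h_G: "h \<in> carrier G" using h subgroup.subset[OF P] by blast
  have "ord h = P.ord h" using ord_subgroup[OF P h] by simp
  also have "P.ord h dvd order (G\<lparr>carrier := P\<rparr>)" using P.ord_dvd_group_order[of h] h by simp
  finally have "ord h dvd p ^ multiplicity p (order G)" using card_P by (simp add: order_def)
  then obtain k where "ord h = p ^ k" using divides_primepow_nat[OF p] by blast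
  then have "ord x = p ^ k" using x ord_conjugate[OF g h_G] by simp
  moreover have "x \<in> carrier G" using x g h_G by simp
  ultimately show "x \<in> {x \<in> carrier G. \<exists>k. ord x = p ^ k}" by blast
qed

lemma (in group) card_conjugates_normalizer:
  assumes fin: "finite (carrier G)" and P: "P \<subseteq> carrier G"
  shows "card ((\<lambda>g. (\<lambda>h. g \<otimes> h \<otimes> inv g) ` P) ` carrier G) * card (normalizer G P) = order G"
proof -
  let ?\<phi> = "\<lambda>g. \<lambda>S\<in>{S. S \<subseteq> carrier G}. g <# S #> inv g"
  interpret A: group_action G "{S. S \<subseteq> carrier G}" ?\<phi>
    by (rule action_by_conjugation_on_power_set)
  have "orbit G ?\<phi> P = (\<lambda>g. ?\<phi> g P) ` carrier G"
    unfolding orbit_def by blast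
  also have "\<dots> = (\<lambda>g. (\<lambda>h. g \<otimes> h \<otimes> inv g) ` P) ` carrier G"
    using P by (auto simp: l_coset_def r_coset_def image_image)
  finally show ?thesis
    using A.orbit_stabilizer_theorem[of P] P unfolding normalizer_def by simp
qed

lemma p_elements_eq_conjugates:
  fixes G P :: "('k::{field,finite}^'n::finite^'n) set"
  assumes G: "subgroup G GL" and p: "Factorial_Ring.prime p" and P: "sylow_sub p G P"
  shows "p_elements p G = (\<Union>g\<in>G. conj_elem g ` P)"
proof -
  let ?H = "GL\<lparr>carrier := G\<rparr>"
  interpret H: group ?H using G GL_group.is_group by (rule subgroup.subgroup_is_group)
  have P_H: "subgroup P ?H" and card_P: "card P = p ^ multiplicity p (order ?H)"
    using P GL_group.subgroup_incl[OF _ G] unfolding sylow_sub_def order_def by auto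
  have "p_elements p G = {x \<in> carrier ?H. \<exists>k. H.ord x = p ^ k}"
    using GL_group.ord_subgroup[OF G] unfolding p_elements_def by auto
  also have "\<dots> = (\<Union>g\<in>carrier ?H. (\<lambda>h. g \<otimes>\<^bsub>?H\<^esub> h \<otimes>\<^bsub>?H\<^esub> inv\<^bsub>?H\<^esub> g) ` P)"
    using H.p_elements_eq_sylow_conjugates[OF _ p P_H card_P] by simp
  also have "\<dots> = (\<Union>g\<in>G. conj_elem g ` P)"
    using conj_elem_subgroup[OF G] by (intro SUP_cong) simp_all
  finally show ?thesis .
qed

lemma card_conjugates_GL:
  fixes G P :: "('k::{field,finite}^'n::finite^'n) set"
  assumes G: "subgroup G GL" and P: "P \<subseteq> G"
  shows "card ((\<lambda>g. conj_elem g ` P) ` G) * card (normalizer (GL\<lparr>carrier := G\<rparr>) P) = card G"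
proof -
  let ?H = "GL\<lparr>carrier := G\<rparr>"
  interpret H: group ?H using G GL_group.is_group by (rule subgroup.subgroup_is_group)
  have "(\<lambda>g. conj_elem g ` P) ` G = (\<lambda>g. (\<lambda>h. g \<otimes>\<^bsub>?H\<^esub> h \<otimes>\<^bsub>?H\<^esub> inv\<^bsub>?H\<^esub> g) ` P) ` carrier ?H"
    using conj_elem_subgroup[OF G] by (intro image_cong) simp_all
  then show ?thesis
    using H.card_conjugates_normalizer[of P] P by (simp add: order_def)
qed

lemma conj_class_eq_image: "conj_class G t = (\<lambda>g. conj_elem g t) ` G"
  unfolding conj_class_def by (rule Setcompr_eq_image)

lemma conj_class_subset:
  fixes G :: "('k::field^'n::finite^'n) set"
  assumes G: "subgroup G GL" and t: "t \<in> G"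
  shows "conj_class G t \<subseteq> G"
proof
  fix s assume "s \<in> conj_class G t"
  then obtain g where g: "g \<in> G" and s: "s = conj_elem g t" unfolding conj_class_def by blast
  have "invertible g" using g subgroup.subset[OF G] by auto
  then have s_GL: "s = g \<otimes>\<^bsub>GL\<^esub> t \<otimes>\<^bsub>GL\<^esub> inv\<^bsub>GL\<^esub> g" using s conj_elem_GL by blast
  have "inv\<^bsub>GL\<^esub> g \<in> G" using subgroup.m_inv_closed[OF G g] .
  then show "s \<in> G" unfolding s_GL using g t by (intro subgroup.m_closed[OF G])
qed

lemma card_conjugates_singleton:
  "card ((\<lambda>g. conj_elem g ` {t}) ` G) = card (conj_class G t)"
proof -
  have "(\<lambda>g. conj_elem g ` {t}) ` G = (\<lambda>s. {s}) ` conj_class G t"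
    unfolding conj_class_eq_image image_image by simp
  moreover have "inj (\<lambda>s. {s})" by (simp add: inj_on_def)
  ultimately show ?thesis by (simp add: card_image inj_on_subset)
qed

text \<open>r_p is attained: some r_p conjugates of P generate O^{p'}(G).  The minimum exists since
  all conjugates of P together generate O^{p'}(G).\<close>

lemma r_p_witness:
  fixes G P :: "('k::{field,finite}^'n::finite^'n) set"
  assumes G: "subgroup G GL" and p: "Factorial_Ring.prime p" and P: "sylow_sub p G P"
  shows "\<exists>gs. length gs = r_p p G P \<and> set gs \<subseteq> G \<and>
    generate GL (\<Union>g\<in>set gs. conj_elem g ` P) = Opp p G"
proof -
  obtain gs where gs: "set gs = G" using finite_list[of G] by auto
  have "generate GL (\<Union>g\<in>set gs. conj_elem g ` P) = Opp p G"
    unfolding gs Opp_def p_elements_eq_conjugates[OF G p P] ..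
  then have "\<exists>r gs. length gs = r \<and> set gs \<subseteq> G \<and> generate GL (\<Union>g\<in>set gs. conj_elem g ` P) = Opp p G"
    using gs by blast
  then show ?thesis unfolding r_p_def by (rule LeastI_ex)
qed

section \<open>Fixed spaces\<close>

lemma fixed_space_antimono:
  assumes "A \<subseteq> B"
  shows "fixed_space B \<subseteq> fixed_space A"
  using assms unfolding fixed_space_def by blast

lemma fixed_space_generate:
  fixes S :: "('k::field^'n::finite^'n) set"
  assumes "S \<subseteq> carrier GL"
  shows "fixed_space (generate GL S) = fixed_space S"
proof
  show "fixed_space (generate GL S) \<subseteq> fixed_space S"
    using generate.incl[of _ S GL] unfolding fixed_space_def by blast
  show "fixed_space S \<subseteq> fixed_space (generate GL S)"
  proof
    fix v assume v: "v \<in> fixed_space S"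
    have "g *v v = v" if "g \<in> generate GL S" for g
      using that
    proof induction
      case one
      then show ?case by simp
    next
      case (incl h)
      then show ?case using v unfolding fixed_space_def mat_act_def by blast
    next
      case (inv h)
      then have h: "invertible h" "h *v v = v"
        using assms v unfolding fixed_space_def mat_act_def by auto
      have "matrix_inv h *v v = matrix_inv h *v (h *v v)" using h(2) by simp
      also have "\<dots> = v" using matrix_inv_inverse[OF h(1)] by (simp add: matrix_vector_mul_assoc)
      finally show ?case using GL_inv[OF h(1)] by simp
    next
      case (eng h1 h2)
      then show ?case by (simp flip: matrix_vector_mul_assoc)
    qed
    then show "v \<in> fixed_space (generate GL S)" by (simp add: fixed_space_def mat_act_def)
  qed
qed

lemma fixed_space_conj:
  fixes g :: "'k::field^'n::finite^'n"
  assumes g: "invertible g"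
  shows "fixed_space (conj_elem g ` Q) = (\<lambda>v. g *v v) ` fixed_space Q"
proof -
  note inverse = matrix_inv_inverse[OF g]
  have fixes_iff: "conj_elem g y *v (g *v v) = g *v v \<longleftrightarrow> y *v v = v" for y v
  proof -
    have "conj_elem g y *v (g *v v) = g *v (y *v (matrix_inv g *v (g *v v)))"
      by (simp add: conj_elem_def matrix_vector_mul_assoc matrix_mul_assoc)
    also have "matrix_inv g *v (g *v v) = v"
      by (simp add: matrix_vector_mul_assoc inverse)
    finally have "conj_elem g y *v (g *v v) = g *v (y *v v)" .
    then show ?thesis using inj_matrix_vector_mult[OF g] by (simp add: inj_eq)
  qed
  have surj: "w = g *v (matrix_inv g *v w)" for w
    by (simp add: matrix_vector_mul_assoc inverse)
  have member: "g *v u \<in> fixed_space (conj_elem g ` Q) \<longleftrightarrow> u \<in> fixed_space Q" for u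
    using fixes_iff unfolding fixed_space_def mat_act_def by auto
  show ?thesis
  proof (intro equalityI subsetI)
    fix w assume "w \<in> fixed_space (conj_elem g ` Q)"
    then have "matrix_inv g *v w \<in> fixed_space Q"
      using member[of "matrix_inv g *v w"] surj[of w] by simp
    then show "w \<in> (\<lambda>v. g *v v) ` fixed_space Q"
      using surj[of w] by blast
  next
    fix w assume "w \<in> (\<lambda>v. g *v v) ` fixed_space Q"
    then show "w \<in> fixed_space (conj_elem g ` Q)" using member by auto
  qed
qed

lemma card_fixed_space_conj:
  fixes g :: "'k::field^'n::finite^'n"
  assumes "invertible g"
  shows "card (fixed_space (conj_elem g ` Q)) = card (fixed_space Q)"
  unfolding fixed_space_conj[OF assms]
  by (rule card_image) (rule inj_on_subset[OF inj_matrix_vector_mult[OF assms]], simp)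

lemma card_fixed_space_pos:
  fixes Q :: "('k::{field,finite}^'n::finite^'n) set"
  shows "card (fixed_space Q) > 0"
proof -
  have "0 \<in> fixed_space Q" by (simp add: fixed_space_def mat_act_def)
  then show ?thesis by (auto simp: card_gt_0_iff)
qed

text \<open>The key consequence of p-exceptionality: for every vector v, every p-subgroup K of G has a
  G-conjugate fixing v.  Indeed K acts on the G-orbit of v, whose size is prime to p.\<close>

lemma exceptional_conjugate_fixes:
  fixes G K :: "('k::{field,finite}^'n::finite^'n) set"
  assumes G: "subgroup G GL" and ex: "p_exceptional p G" and p: "Factorial_Ring.prime p"
    and K: "subgroup K GL" "K \<subseteq> G" "card K = p ^ m"
  shows "\<exists>g\<in>G. v \<in> fixed_space (conj_elem g ` K)"
proof -
  let ?E = "orbit (GL\<lparr>carrier := G\<rparr>) mat_act v"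
  have E: "?E = {g *v v | g. g \<in> G}" by (simp add: orbit_def mat_act_def)
  have "coprime (card ?E) p" using ex unfolding p_exceptional_def by blast
  then have not_dvd: "\<not> p dvd card ?E"
    using p by (metis coprime_absorb_right not_prime_unit)
  interpret K: group "GL\<lparr>carrier := K\<rparr>" using K(1) GL_group.is_group by (rule subgroup.subgroup_is_group)
  have closed: "k *v x \<in> ?E" if "k \<in> carrier (GL\<lparr>carrier := K\<rparr>)" and "x \<in> ?E" for k x
  proof -
    obtain g where g: "g \<in> G" "x = g *v v" using \<open>x \<in> ?E\<close> E by blast
    have "k ** g \<in> G" using subgroup.m_closed[OF G, of k g] that(1) g K(2) by auto
    moreover have "k *v x = (k ** g) *v v" using g by (simp add: matrix_vector_mul_assoc)
    ultimately show ?thesis using E by blast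
  qed
  obtain w where w: "w \<in> ?E" and fixed: "\<forall>k\<in>K. k *v w = w"
    using p_group_fixed_point[OF K.is_group _ p _ not_dvd, of m "\<lambda>k x. k *v x"] closed K(3)
    by (auto simp: matrix_vector_mul_assoc)
  obtain g where g: "g \<in> G" "w = g *v v" using w E by auto
  have g_inv: "invertible g" using g(1) subgroup.subset[OF G] by auto
  have "matrix_inv g \<in> G"
    using subgroup.m_inv_closed[OF G g(1)] GL_inv[OF g_inv] by simp
  moreover have "v \<in> (\<lambda>u. matrix_inv g *v u) ` fixed_space K"
  proof
    show "w \<in> fixed_space K" using fixed unfolding fixed_space_def mat_act_def by blast
    show "v = matrix_inv g *v w"
      using g(2) matrix_inv_inverse[OF g_inv] by (simp add: matrix_vector_mul_assoc)
  qed
  ultimately show ?thesis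
    using fixed_space_conj[OF invertible_matrix_inv[OF g_inv]] by auto
qed

section \<open>Counting bounds\<close>

lemma card_eq_card_range_mult:
  fixes f :: "'a::{ab_group_add,finite} \<Rightarrow> 'b"
  assumes fibres: "\<And>v w. f v = f w \<longleftrightarrow> v - w \<in> Kr"
  shows "CARD('a) = card (range f) * card Kr"
proof -
  have fibre: "f -` {f v} = (\<lambda>k. k + v) ` Kr" for v
  proof (intro equalityI subsetI)
    fix x assume "x \<in> f -` {f v}"
    then have "x - v \<in> Kr" using fibres by simp
    then show "x \<in> (\<lambda>k. k + v) ` Kr" by (rule rev_image_eqI) simp
  next
    fix x assume "x \<in> (\<lambda>k. k + v) ` Kr"
    then show "x \<in> f -` {f v}" using fibres[of x v] by auto
  qed
  have card_fibre: "card (f -` {y}) = card Kr" if "y \<in> range f" for y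
    using that fibre by (auto intro!: card_image simp: inj_on_def)
  have partition: "(\<Union>y\<in>range f. f -` {y}) = UNIV" by blast
  then have "CARD('a) = card (\<Union>y\<in>range f. f -` {y})" by (simp only: partition)
  also have "\<dots> = (\<Sum>y\<in>range f. card (f -` {y}))"
    by (rule card_UN_disjoint) auto
  also have "\<dots> = card (range f) * card Kr"
    using card_fibre by simp
  finally show ?thesis .
qed

text \<open>The displacement map of Q sends v to the family of the vectors y v - v for y in Q.  Its
  fibres are the cosets of the fixed space, so its range has size |V : C_V(Q)|.\<close>

definition displacement :: "('k::field^'n::finite^'n) set \<Rightarrow> 'k^'n \<Rightarrow> ('k^'n^'n \<Rightarrow> 'k^'n)" where
  "displacement Q v = (\<lambda>y. if y \<in> Q then y *v v - v else 0)"

lemma displacement_eq_iff: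
  fixes Q :: "('k::field^'n::finite^'n) set"
  shows "displacement Q v = displacement Q w \<longleftrightarrow> v - w \<in> fixed_space Q"
proof -
  have pointwise: "y *v v - v = y *v w - w \<longleftrightarrow> y *v (v - w) = v - w" for y :: "'k^'n^'n"
  proof -
    have "(a - b = c - d) \<longleftrightarrow> (a - c = b - d)" for a b c d :: "'k^'n"
      by (simp add: algebra_simps)
    then show ?thesis by (simp add: matrix_vector_mult_diff_distrib)
  qed
  have "displacement Q v = displacement Q w \<longleftrightarrow> (\<forall>y\<in>Q. y *v v - v = y *v w - w)"
    unfolding displacement_def fun_eq_iff by auto
  also have "\<dots> \<longleftrightarrow> v - w \<in> fixed_space Q"
    unfolding pointwise fixed_space_def mat_act_def by blast
  finally show ?thesis .
qed

lemma card_displacement: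
  fixes Q :: "('k::{field,finite}^'n::finite^'n) set"
  shows "CARD('k^'n) = card (range (displacement Q)) * card (fixed_space Q)"
  using card_eq_card_range_mult displacement_eq_iff by blast

text \<open>If the sets Q_i have trivial common fixed space, then v is determined by its
  displacements, so |V| is at most the product of the indices |V : C_V(Q_i)|.\<close>

lemma card_le_prod_displacement:
  fixes Qs :: "('k::{field,finite}^'n::finite^'n) set list"
  assumes trivial: "fixed_space (\<Union>(set Qs)) = {0}"
  shows "CARD('k^'n) \<le> (\<Prod>i<length Qs. card (range (displacement (Qs ! i))))"
proof -
  let ?F = "\<lambda>v. \<lambda>i\<in>{..<length Qs}. displacement (Qs ! i) v"
  have "inj ?F"
  proof (rule injI)
    fix v w assume F_eq: "?F v = ?F w"
    have "v - w \<in> fixed_space (Qs ! i)" if "i < length Qs" for i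
    proof -
      have "?F v i = ?F w i" using F_eq by simp
      then show ?thesis using that by (simp add: displacement_eq_iff)
    qed
    then have "v - w \<in> fixed_space Q" if "Q \<in> set Qs" for Q
      using that by (auto simp: in_set_conv_nth)
    then have "v - w \<in> fixed_space (\<Union>(set Qs))" unfolding fixed_space_def by blast
    then show "v = w" using trivial by simp
  qed
  moreover have "range ?F \<subseteq> PiE {..<length Qs} (\<lambda>i. range (displacement (Qs ! i)))" by auto
  ultimately have "CARD('k^'n) \<le> card (PiE {..<length Qs} (\<lambda>i. range (displacement (Qs ! i))))"
    by (rule card_inj_on_le) (simp add: finite_PiE)
  then show ?thesis by (simp add: card_PiE)
qed

lemma card_le_cover:
  fixes S :: "('k::{field,finite}^'n::finite^'n) set set"
  assumes cover: "\<And>v. \<exists>Q\<in>S. v \<in> fixed_space Q"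
    and same_card: "\<And>Q. Q \<in> S \<Longrightarrow> card (fixed_space Q) = c"
  shows "CARD('k^'n) \<le> card S * c"
proof -
  have "(\<Union>Q\<in>S. fixed_space Q) = UNIV" using cover by blast
  then have "CARD('k^'n) = card (\<Union>Q\<in>S. fixed_space Q)" by simp
  also have "\<dots> \<le> (\<Sum>Q\<in>S. card (fixed_space Q))" by (rule card_UN_le) simp
  also have "\<dots> = card S * c" using same_card by simp
  finally show ?thesis .
qed

lemma conjugate_cover_bound:
  fixes G K T :: "('k::{field,finite}^'n::finite^'n) set"
  assumes G: "subgroup G GL" and ex: "p_exceptional p G" and p: "Factorial_Ring.prime p"
    and K: "subgroup K GL" "K \<subseteq> G" "card K = p ^ m" and T: "T \<subseteq> K"
  shows "CARD('k^'n) \<le> card ((\<lambda>g. conj_elem g ` T) ` G) * card (fixed_space T)"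
proof (rule card_le_cover)
  fix v
  obtain g where g: "g \<in> G" and v: "v \<in> fixed_space (conj_elem g ` K)"
    using exceptional_conjugate_fixes[OF G ex p K] by blast
  have "v \<in> fixed_space (conj_elem g ` T)"
    using v fixed_space_antimono[OF image_mono[OF T]] by blast
  then show "\<exists>Q\<in>(\<lambda>g. conj_elem g ` T) ` G. v \<in> fixed_space Q"
    using g by blast
next
  fix Q assume "Q \<in> (\<lambda>g. conj_elem g ` T) ` G"
  then obtain g where "g \<in> G" and "Q = conj_elem g ` T" by blast
  then show "card (fixed_space Q) = card (fixed_space T)"
    using card_fixed_space_conj subgroup.subset[OF G] by auto
qed

text \<open>Generation bound: if the Q_i have trivial common fixed space, all fixed spaces have the
  same size c, and |V| <= N c, then each index |V : C_V(Q_i)| is at most N and |V| <= N^r.\<close>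

lemma generation_bound:
  fixes Qs :: "('k::{field,finite}^'n::finite^'n) set list"
  assumes trivial: "fixed_space (\<Union>(set Qs)) = {0}"
    and same_card: "\<And>Q. Q \<in> set Qs \<Longrightarrow> card (fixed_space Q) = c"
    and cover_bound: "CARD('k^'n) \<le> N * c"
  shows "CARD('k^'n) \<le> N ^ length Qs"
proof -
  have "card (range (displacement Q)) \<le> N" if "Q \<in> set Qs" for Q
  proof -
    have "card (range (displacement Q)) * c \<le> N * c"
      using card_displacement[of Q] same_card[OF that] cover_bound by simp
    then show ?thesis using card_fixed_space_pos[of Q] same_card[OF that] by simp
  qed
  then have "(\<Prod>i<length Qs. card (range (displacement (Qs ! i)))) \<le> (\<Prod>i<length Qs. N)"
    by (intro prod_mono) auto
  then show ?thesis using card_le_prod_displacement[OF trivial] by simp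
qed

lemma card_field_gt_1: "1 < CARD('k::{field,finite})"
proof -
  have "card {0::'k, 1} \<le> CARD('k)" by (rule card_mono) auto
  then show ?thesis by simp
qed

lemma log_bound_of_power_le:
  fixes q N d r :: nat
  assumes q: "1 < q" and N: "1 \<le> N" and le: "q ^ d \<le> N ^ r"
  shows "real d \<le> real r * log (real q) (real N)"
proof -
  have "real d = log (real q) (real q ^ d)"
    using q by (simp add: log_nat_power)
  also have "\<dots> \<le> log (real q) (real N ^ r)"
    using q N le by (subst log_le_cancel_iff) (auto simp flip: of_nat_power)
  also have "\<dots> = real r * log (real q) (real N)"
    using N by (simp add: log_nat_power)
  finally show ?thesis .
qed

lemma powr_bound_of_power_le:
  fixes q N d m :: nat
  assumes q: "0 < q" and N: "1 \<le> N" and le: "q ^ d \<le> N ^ m"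
  shows "real q powr (real d / real m) \<le> real N"
proof (cases "m = 0")
  case True
  then show ?thesis using q N by simp
next
  case False
  have "(real q powr (real d / real m)) ^ m = real q powr (real d / real m * real m)"
    using q by (simp add: powr_realpow[symmetric] powr_powr del: of_nat_eq_0_iff)
  also have "real d / real m * real m = real d" using False by simp
  also have "real q powr real d = real (q ^ d)" using q by (simp add: powr_realpow)
  also have "\<dots> \<le> real N ^ m" using le by (simp flip: of_nat_power)
  finally show ?thesis
    using False by (simp add: power_mono_iff)
qed

lemma sylow_dimension_bound:
  fixes G P :: "('k::{field,finite}^'n::finite^'n) set"
  assumes p: "Factorial_Ring.prime p" and G: "subgroup G GL" and ex: "p_exceptional p G"
    and trivial: "fixed_space (Opp p G) = {0}" and P: "sylow_sub p G P"
  shows "real CARD('n) \<le> real (r_p p G P) *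
    log (real CARD('k)) (real (card G) / real (card (normalizer (GL\<lparr>carrier := G\<rparr>) P)))"
proof -
  have P_sub: "subgroup P GL" "P \<subseteq> G" "card P = p ^ multiplicity p (card G)"
    using P unfolding sylow_sub_def by auto
  have G_GL: "G \<subseteq> carrier GL" using subgroup.subset[OF G] .
  define N where "N = card ((\<lambda>g. conj_elem g ` P) ` G)"
  have index: "N * card (normalizer (GL\<lparr>carrier := G\<rparr>) P) = card G"
    unfolding N_def by (rule card_conjugates_GL[OF G P_sub(2)])
  have "card G \<noteq> 0" using subgroup.one_closed[OF G] by (auto simp: card_eq_0_iff)
  then have "N \<noteq> 0" and normalizer_pos: "card (normalizer (GL\<lparr>carrier := G\<rparr>) P) \<noteq> 0"
    using index by auto
  then have N_pos: "1 \<le> N" by simp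
  have N_eq: "real (card G) / real (card (normalizer (GL\<lparr>carrier := G\<rparr>) P)) = real N"
    using normalizer_pos by (simp flip: index)
  obtain gs where gs: "length gs = r_p p G P" "set gs \<subseteq> G"
    "generate GL (\<Union>g\<in>set gs. conj_elem g ` P) = Opp p G"
    using r_p_witness[OF G p P] by blast
  define Qs where "Qs = map (\<lambda>g. conj_elem g ` P) gs"
  have sub: "(\<Union>g\<in>set gs. conj_elem g ` P) \<subseteq> carrier GL"
    using gs(2) P_sub(2) G_GL conj_class_subset[OF G] unfolding conj_class_eq_image by blast
  have union: "\<Union>(set Qs) = (\<Union>g\<in>set gs. conj_elem g ` P)" unfolding Qs_def by simp
  have "fixed_space (\<Union>(set Qs)) = {0}"
    unfolding union fixed_space_generate[OF sub, symmetric] gs(3) by (rule trivial)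
  moreover have "card (fixed_space Q) = card (fixed_space P)" if "Q \<in> set Qs" for Q
    using that gs(2) G_GL card_fixed_space_conj unfolding Qs_def by auto
  moreover have "CARD('k^'n) \<le> N * card (fixed_space P)"
    unfolding N_def using conjugate_cover_bound[OF G ex p P_sub order.refl] .
  ultimately have "CARD('k^'n) \<le> N ^ length Qs" by (rule generation_bound)
  then have "CARD('k^'n) \<le> N ^ r_p p G P" using gs(1) unfolding Qs_def by simp
  then have "CARD('k) ^ CARD('n) \<le> N ^ r_p p G P" by (simp add: CARD_vec)
  then show ?thesis
    unfolding N_eq by (rule log_bound_of_power_le[OF card_field_gt_1 N_pos])
qed

lemma card_le_fixed_mult_conj_class:
  fixes G :: "('k::{field,finite}^'n::finite^'n) set"
  assumes p: "Factorial_Ring.prime p" and G: "subgroup G GL" and ex: "p_exceptional p G"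
    and t: "t \<in> G" and ord_t: "group.ord GL t = p ^ k"
  shows "CARD('k^'n) \<le> card (fixed_space {t}) * card (conj_class G t)"
proof -
  define K where "K = generate GL {t}"
  have t_GL: "t \<in> carrier GL" using t subgroup.subset[OF G] by blast
  have "subgroup K GL" unfolding K_def using t_GL by (intro GL_group.generate_is_subgroup) simp
  moreover have "K \<subseteq> G" unfolding K_def using t by (intro GL_group.generate_subgroup_incl[OF _ G]) simp
  moreover have "card K = p ^ k" unfolding K_def using GL_group.generate_pow_card[OF t_GL] ord_t by simp
  ultimately have K: "subgroup K GL" "K \<subseteq> G" "card K = p ^ k" by blast+
  have "{t} \<subseteq> K" unfolding K_def by (auto intro: generate.incl)
  from conjugate_cover_bound[OF G ex p K this, unfolded card_conjugates_singleton]
  show ?thesis by (simp only: mult.commute)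
qed

lemma conj_class_generation_bound:
  fixes G :: "('k::{field,finite}^'n::finite^'n) set"
  assumes p: "Factorial_Ring.prime p" and G: "subgroup G GL" and ex: "p_exceptional p G"
    and trivial: "fixed_space (Opp p G) = {0}"
    and t: "t \<in> G" and ord_t: "group.ord GL t = p ^ k"
    and ts: "set ts \<subseteq> conj_class G t" and generates: "generate GL (set ts) = Opp p G"
  shows "real CARD('k) powr (real CARD('n) / real (length ts)) \<le> real (card (conj_class G t))"
proof -
  define Qs where "Qs = map (\<lambda>s. {s}) ts"
  have union: "\<Union>(set Qs) = set ts" unfolding Qs_def by auto
  have sub: "set ts \<subseteq> carrier GL"
    using ts conj_class_subset[OF G t] subgroup.subset[OF G] by blast
  have "fixed_space (\<Union>(set Qs)) = {0}"
    unfolding union fixed_space_generate[OF sub, symmetric] generates by (rule trivial)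
  moreover have "card (fixed_space Q) = card (fixed_space {t})" if Q: "Q \<in> set Qs" for Q
  proof -
    obtain s where "s \<in> set ts" and "Q = {s}" using Q unfolding Qs_def by auto
    then obtain g where g: "g \<in> G" and Q_eq: "Q = conj_elem g ` {t}"
      using ts unfolding conj_class_eq_image by auto
    have "invertible g" using g subgroup.subset[OF G] by auto
    then show ?thesis unfolding Q_eq by (rule card_fixed_space_conj)
  qed
  moreover have "CARD('k^'n) \<le> card (conj_class G t) * card (fixed_space {t})"
    using card_le_fixed_mult_conj_class[OF p G ex t ord_t] by (simp add: mult.commute)
  ultimately have "CARD('k^'n) \<le> card (conj_class G t) ^ length Qs" by (rule generation_bound)
  then have "CARD('k) ^ CARD('n) \<le> card (conj_class G t) ^ length ts"
    unfolding Qs_def by (simp add: CARD_vec)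
  moreover have "1 \<le> card (conj_class G t)"
    using t by (auto simp: Suc_le_eq card_gt_0_iff conj_class_eq_image)
  ultimately show ?thesis
    using powr_bound_of_power_le card_field_gt_1 by (metis less_trans zero_less_one)
qed

text \<open>The three parts together; the argument does not use that q is a power of p.\<close>

theorem lemma2p4:
  fixes G P :: "('k::{field,finite} ^'n::finite ^'n) set"
    and t :: "'k ^'n ^'n"
    and p a :: nat
  assumes "Factorial_Ring.prime p"
    and "CARD('k) = p ^ a"
    and "subgroup G GL"
    and "p_exceptional p G"
    and "fixed_space (Opp p G) = {0}"
    and "t \<in> G" and "group.ord GL t = p"
    and "sylow_sub p G P"
  shows "real CARD('n) \<le> real (r_p p G P) *
           log (real CARD('k)) (real (card G) / real (card (normalizer (GL\<lparr>carrier := G\<rparr>) P)))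
         \<and> CARD('k ^'n) \<le> card (fixed_space {t}) * card (conj_class G t)
         \<and> (\<forall>ts. set ts \<subseteq> conj_class G t \<and> generate GL (set ts) = Opp p G \<longrightarrow>
           real CARD('k) powr (real CARD('n) / real (length ts)) \<le> real (card (conj_class G t)))"
proof (intro conjI allI impI)
  note p = assms(1) and G = assms(3) and ex = assms(4) and trivial = assms(5) and t = assms(6)
  have ord_t: "group.ord GL t = p ^ 1" using assms(7) by simp
  show "real CARD('n) \<le> real (r_p p G P) *
      log (real CARD('k)) (real (card G) / real (card (normalizer (GL\<lparr>carrier := G\<rparr>) P)))"
    by (rule sylow_dimension_bound[OF p G ex trivial assms(8)])
  show "CARD('k ^'n) \<le> card (fixed_space {t}) * card (conj_class G t)"
    by (rule card_le_fixed_mult_conj_class[OF p G ex t ord_t])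
  fix ts assume "set ts \<subseteq> conj_class G t \<and> generate GL (set ts) = Opp p G"
  then show "real CARD('k) powr (real CARD('n) / real (length ts)) \<le> real (card (conj_class G t))"
    using conj_class_generation_bound[OF p G ex trivial t ord_t] by blast
qed

end
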